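(* For any $\mathcal{H}\subseteq\{0,1\}^{\mathcal{X}}$ with $\operatorname{L}(\mathcal{H})=1$ and any time horizon $T$, there exists a deterministic online learner which, under apple tasting feedback, makes at most $1+2\sqrt{T}$ mistakes on any sequence $(x_1,y_1),\dots,(x_T,y_T)$ realizable by $\mathcal{H}$ (i.e. $y_t=h(x_t)$ for all $t$ for some $h\in\mathcal{H}$).
   Context: Apple tasting feedback: in each round the learner receives $x_t\in\mathcal{X}$, predicts $\hat y_t\in\{0,1\}$, and observes the true label $y_t$ only if $\hat y_t=1$; a mistake is a round with $\hat y_t\ne y_t$. The Littlestone dimension $\operatorname{L}(\mathcal{H})$ is the largest $d$ such that there is a complete binary tree of depth $d$ with internal nodes labeled by instances of $\mathcal{X}$ that is shattered by $\mathcal{H}$: for every root-to-leaf path $\sigma\in\{0,1\}^d$ (with $x_i$ the instance at the node reached by prefix $\sigma_1\dots\sigma_{i-1}$) some $h\in\mathcal{H}$ satisfies $h(x_i)=\sigma_i$ for all $i$. *)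

theory Defs
  imports Complex_Main
begin

text \<open>Hypotheses are functions from the instance type 'x (the domain X = UNIV)
  to bool (labels 0/1 as False/True).
  A Littlestone tree of depth d is a map from prefixes (bool lists of length < d)
  to instances: the node reached by prefix sigma_1..sigma_(i-1) is labelled
  tr (take i sigma).\<close>

definition ltree_shattered :: "('x \<Rightarrow> bool) set \<Rightarrow> nat \<Rightarrow> (bool list \<Rightarrow> 'x) \<Rightarrow> bool" where
  "ltree_shattered H d tr \<longleftrightarrow>
     (\<forall>\<sigma>::bool list. length \<sigma> = d \<longrightarrow>
        (\<exists>h\<in>H. \<forall>i<d. h (tr (take i \<sigma>)) = \<sigma> ! i))"

definition shatters_depth :: "('x \<Rightarrow> bool) set \<Rightarrow> nat \<Rightarrow> bool" where
  "shatters_depth H d \<longleftrightarrow> (\<exists>tr. ltree_shattered H d tr)"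

definition littlestone_dim_eq :: "('x \<Rightarrow> bool) set \<Rightarrow> nat \<Rightarrow> bool" where
  "littlestone_dim_eq H d \<longleftrightarrow> shatters_depth H d \<and> (\<forall>d'. shatters_depth H d' \<longrightarrow> d' \<le> d)"

text \<open>A deterministic apple-tasting learner: given the feedback history
  (past instances with Some y if the learner predicted 1 and thus saw y,
  None if it predicted 0) and the current instance, it outputs a prediction.\<close>
type_synonym 'x at_learner = "('x \<times> bool option) list \<Rightarrow> 'x \<Rightarrow> bool"

fun at_mistakes_from :: "('x \<times> bool option) list \<Rightarrow> 'x at_learner \<Rightarrow> ('x \<times> bool) list \<Rightarrow> nat" where
  "at_mistakes_from hist L [] = 0"
| "at_mistakes_from hist L ((x, y) # rest) =
     (let p = L hist x in
       (if p \<noteq> y then 1 else 0) +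
       at_mistakes_from (hist @ [(x, if p then Some y else None)]) L rest)"

definition at_mistakes :: "'x at_learner \<Rightarrow> ('x \<times> bool) list \<Rightarrow> nat" where
  "at_mistakes L s = at_mistakes_from [] L s"

definition realizable :: "('x \<Rightarrow> bool) set \<Rightarrow> ('x \<times> bool) list \<Rightarrow> bool" where
  "realizable H s \<longleftrightarrow> (\<exists>h\<in>H. \<forall>(x, y)\<in>set s. h x = y)"

end

theory Submission
  imports Defs
begin

text \<open>The learner keeps the version space V of hypotheses consistent with the labels it has seen.
  If at most one member of V labels the current instance 0 it predicts 1; since L(H) = 1,
  otherwise at most one member g of V labels it 1, and the learner predicts 1 only once g has
  been silently right on at least k rounds where it predicted 0. With target hs, a mistake
  costs k + 1 units of the potential (k + 1) (E + (k - m)) + P, where E says whether V is not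
  yet a singleton, m counts the unobserved rounds on which hs was 1, and P counts the
  unobserved rounds on which some surviving rival of hs was 1; each round adds at most 1.
  Hence (k + 1) M \<le> (k + 1)^2 + T, and k = \<lfloor>sqrt T\<rfloor> gives M \<le> 1 + 2 sqrt T.\<close>

type_synonym 'x at_history = "('x \<times> bool option) list"

definition at_most_one_labelling :: "('x \<Rightarrow> bool) set \<Rightarrow> 'x \<Rightarrow> bool \<Rightarrow> bool" where
  "at_most_one_labelling V x b \<longleftrightarrow> (\<forall>g\<in>V. \<forall>g'\<in>V. g x = b \<longrightarrow> g' x = b \<longrightarrow> g = g')"

lemma not_shatters_2_at_most_one_labelling:
  assumes "\<not> shatters_depth H 2" and "V \<subseteq> H" and "\<not> at_most_one_labelling V x b"
  shows "at_most_one_labelling V x (\<not> b)"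
  unfolding at_most_one_labelling_def
proof (intro ballI impI; rule ccontr)
  fix g g' assume g: "g \<in> V" "g' \<in> V" "g x = (\<not> b)" "g' x = (\<not> b)" "g \<noteq> g'"
  obtain h h' where h: "h \<in> V" "h' \<in> V" "h x = b" "h' x = b" "h \<noteq> h'"
    using assms(3) by (auto simp: at_most_one_labelling_def)
  obtain x0 where x0: "h x0 \<noteq> h' x0" using h(5) by (auto simp: fun_eq_iff)
  obtain x1 where x1: "g x1 \<noteq> g' x1" using g(5) by (auto simp: fun_eq_iff)
  define tr where "tr = (\<lambda>l::bool list. if l = [] then x else if hd l = b then x0 else x1)"
  have "ltree_shattered H 2 tr"
    unfolding ltree_shattered_def
  proof (intro allI impI)
    fix \<sigma> :: "bool list" assume "length \<sigma> = 2"
    then obtain a c where \<sigma>: "\<sigma> = [a, c]"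
      by (auto simp: length_Suc_conv numeral_2_eq_2)
    have "\<exists>f\<in>V. f x = a \<and> f (if a = b then x0 else x1) = c"
    proof (cases "a = b")
      case True
      then show ?thesis using h x0 by (cases c; cases "h x0") auto
    next
      case False
      then show ?thesis using g x1 by (cases c; cases "g x1") auto
    qed
    then obtain f where f: "f \<in> H" "f x = a" "f (if a = b then x0 else x1) = c"
      using assms(2) by blast
    have "\<forall>i<2. f (tr (take i \<sigma>)) = \<sigma> ! i"
      using f by (auto simp: \<sigma> tr_def less_2_cases_iff)
    then show "\<exists>h\<in>H. \<forall>i<2. h (tr (take i \<sigma>)) = \<sigma> ! i"
      using f(1) by blast
  qed
  then show False using assms(1) by (auto simp: shatters_depth_def)
qed

lemma length_filter_mono:
  "(\<And>e. e \<in> set xs \<Longrightarrow> A e \<Longrightarrow> R e) \<Longrightarrow> length (filter A xs) \<le> length (filter R xs)"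
  by (induction xs) auto

lemma length_filter_disjoint_add_le:
  assumes "\<And>e. e \<in> set xs \<Longrightarrow> A e \<Longrightarrow> \<not> B e"
    and "\<And>e. e \<in> set xs \<Longrightarrow> A e \<or> B e \<Longrightarrow> R e"
  shows "length (filter A xs) + length (filter B xs) \<le> length (filter R xs)"
  using assms
proof (induction xs)
  case (Cons a xs)
  then show ?case by (cases "A a"; cases "B a") auto
qed simp

definition version_space :: "('x \<Rightarrow> bool) set \<Rightarrow> 'x at_history \<Rightarrow> ('x \<Rightarrow> bool) set" where
  "version_space H hist = {h\<in>H. \<forall>(x, ob)\<in>set hist. \<forall>y. ob = Some y \<longrightarrow> h x = y}"

lemma version_space_Nil [simp]: "version_space H [] = H"
  by (simp add: version_space_def)

lemma version_space_subset: "version_space H hist \<subseteq> H"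
  by (auto simp: version_space_def)

lemma version_space_append_None [simp]:
  "version_space H (hist @ [(x, None)]) = version_space H hist"
  by (auto simp: version_space_def)

lemma version_space_append_Some [simp]:
  "version_space H (hist @ [(x, Some y)]) = {h \<in> version_space H hist. h x = y}"
  by (auto simp: version_space_def)

definition unobserved_positives :: "'x at_history \<Rightarrow> ('x \<Rightarrow> bool) \<Rightarrow> nat" where
  "unobserved_positives hist g = length (filter (\<lambda>(x, ob). ob = None \<and> g x) hist)"

lemma unobserved_positives_append_None [simp]:
  "unobserved_positives (hist @ [(x, None)]) g = unobserved_positives hist g + of_bool (g x)"
  by (simp add: unobserved_positives_def)

lemma unobserved_positives_append_Some [simp]:
  "unobserved_positives (hist @ [(x, Some y)]) g = unobserved_positives hist g"
  by (simp add: unobserved_positives_def)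

definition threshold_learner :: "('x \<Rightarrow> bool) set \<Rightarrow> nat \<Rightarrow> 'x at_learner" where
  "threshold_learner H k hist x =
     (\<exists>g\<in>version_space H hist. g x \<and>
        (k \<le> unobserved_positives hist g \<or> at_most_one_labelling (version_space H hist) x False))"

definition unobserved_rounds_unique :: "('x \<Rightarrow> bool) set \<Rightarrow> 'x at_history \<Rightarrow> bool" where
  "unobserved_rounds_unique H hist \<longleftrightarrow>
     (\<forall>(x, ob)\<in>set hist. ob = None \<longrightarrow> at_most_one_labelling (version_space H hist) x True)"

lemma unobserved_rounds_unique_Nil: "unobserved_rounds_unique H []"
  by (simp add: unobserved_rounds_unique_def)

lemma unobserved_rounds_unique_append_Some:
  "unobserved_rounds_unique H hist \<Longrightarrow> unobserved_rounds_unique H (hist @ [(x, Some y)])"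
  by (auto simp: unobserved_rounds_unique_def at_most_one_labelling_def)

lemma unobserved_rounds_unique_append_None:
  "unobserved_rounds_unique H hist \<Longrightarrow> at_most_one_labelling (version_space H hist) x True
   \<Longrightarrow> unobserved_rounds_unique H (hist @ [(x, None)])"
  by (auto simp: unobserved_rounds_unique_def)

definition rival_charge :: "('x \<Rightarrow> bool) set \<Rightarrow> ('x \<Rightarrow> bool) \<Rightarrow> 'x at_history \<Rightarrow> nat" where
  "rival_charge H hs hist =
     length (filter (\<lambda>(x, ob). ob = None \<and> (\<exists>g\<in>version_space H hist. g \<noteq> hs \<and> g x)) hist)"

lemma rival_charge_append_None:
  "rival_charge H hs (hist @ [(x, None)]) =
     rival_charge H hs hist + of_bool (\<exists>g\<in>version_space H hist. g \<noteq> hs \<and> g x)"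
  by (simp add: rival_charge_def)

lemma rival_charge_append_Some_le:
  "rival_charge H hs (hist @ [(x, Some y)]) \<le> rival_charge H hs hist"
  unfolding rival_charge_def by (simp, rule length_filter_mono) auto

text \<open>The unobserved rounds on which the eliminated rival g was 1 had g as their only positive
  hypothesis, so they stop being charged.\<close>

lemma rival_charge_eliminate:
  assumes "unobserved_rounds_unique H hist" and "g \<in> version_space H hist" "g x" "g \<noteq> hs"
  shows "rival_charge H hs (hist @ [(x, Some False)]) + unobserved_positives hist g
    \<le> rival_charge H hs hist"
  unfolding rival_charge_def unobserved_positives_def
proof (simp, rule length_filter_disjoint_add_le; clarify)
  fix x' g' assume "(x', None) \<in> set hist" "g' \<in> version_space H hist" "\<not> g' x" "g' x'" "g x'"
  moreover from this(1) have "at_most_one_labelling (version_space H hist) x' True"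
    using assms(1) unfolding unobserved_rounds_unique_def by fastforce
  ultimately show False
    using assms(2,3) unfolding at_most_one_labelling_def by metis
next
  fix x' ob assume "ob = None \<and> (\<exists>g'. g' \<in> version_space H hist \<and> \<not> g' x \<and> g' \<noteq> hs \<and> g' x')
    \<or> ob = None \<and> g x'"
  then show "ob = None \<and> (\<exists>g'\<in>version_space H hist. g' \<noteq> hs \<and> g' x')"
    using assms(2,4) by blast
qed

definition ambiguous :: "('x \<Rightarrow> bool) set \<Rightarrow> bool" where
  "ambiguous V \<longleftrightarrow> (\<exists>g\<in>V. \<exists>g'\<in>V. g \<noteq> g')"

lemma ambiguous_mono: "V \<subseteq> W \<Longrightarrow> ambiguous V \<Longrightarrow> ambiguous W"
  by (auto simp: ambiguous_def)

definition potential :: "('x \<Rightarrow> bool) set \<Rightarrow> nat \<Rightarrow> ('x \<Rightarrow> bool) \<Rightarrow> 'x at_history \<Rightarrow> nat" where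
  "potential H k hs hist =
     (k + 1) * (of_bool (ambiguous (version_space H hist)) + (k - unobserved_positives hist hs))
     + rival_charge H hs hist"

lemma potential_Nil_le: "potential H k hs [] \<le> (k + 1) * (k + 1)"
  by (simp add: potential_def unobserved_positives_def rival_charge_def)

lemma potential_append_Some_add_le:
  assumes "rival_charge H hs (hist @ [(x, Some y)]) + d \<le> rival_charge H hs hist"
  shows "potential H k hs (hist @ [(x, Some y)]) + d \<le> potential H k hs hist"
proof -
  have "of_bool (ambiguous (version_space H (hist @ [(x, Some y)])))
      \<le> (of_bool (ambiguous (version_space H hist)) :: nat)"
    using ambiguous_mono[of "version_space H (hist @ [(x, Some y)])" "version_space H hist"] by auto
  then have "(k + 1) * (of_bool (ambiguous (version_space H (hist @ [(x, Some y)])))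
        + (k - unobserved_positives (hist @ [(x, Some y)]) hs))
      \<le> (k + 1) * (of_bool (ambiguous (version_space H hist)) + (k - unobserved_positives hist hs))"
    by (intro mult_le_mono2) simp
  then show ?thesis
    using assms unfolding potential_def by linarith
qed

text \<open>A false positive either removes the last rival of hs, or removes a rival g with at least
  k charged rounds.\<close>

lemma potential_false_positive:
  assumes "unobserved_rounds_unique H hist" and "hs \<in> version_space H hist" "\<not> hs x"
    and "g \<in> version_space H hist" "g x"
    and "k \<le> unobserved_positives hist g \<or> at_most_one_labelling (version_space H hist) x False"
  shows "potential H k hs (hist @ [(x, Some False)]) + k \<le> potential H k hs hist"
proof -
  define hist' where "hist' = hist @ [(x, Some False)]"
  have "g \<noteq> hs" using assms(3,5) by auto
  from assms(6) have "potential H k hs hist' + k \<le> potential H k hs hist"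
  proof
    assume "k \<le> unobserved_positives hist g"
    then show ?thesis
      using rival_charge_eliminate[OF assms(1,4,5) \<open>g \<noteq> hs\<close>]
      unfolding hist'_def by (intro potential_append_Some_add_le) simp
  next
    assume "at_most_one_labelling (version_space H hist) x False"
    then have "\<not> ambiguous (version_space H hist')"
      by (auto simp: ambiguous_def at_most_one_labelling_def hist'_def)
    moreover have "ambiguous (version_space H hist)"
      using assms(2,4) \<open>g \<noteq> hs\<close> by (auto simp: ambiguous_def)
    moreover have "rival_charge H hs hist' \<le> rival_charge H hs hist"
      by (simp add: hist'_def rival_charge_append_Some_le)
    ultimately show ?thesis
      by (simp add: potential_def hist'_def algebra_simps)
  qed
  then show ?thesis by (simp add: hist'_def)
qed

lemma potential_unobserved:
  assumes "at_most_one_labelling (version_space H hist) x True"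
    and "hs \<in> version_space H hist" and "hs x \<Longrightarrow> unobserved_positives hist hs < k"
  shows "(k + 1) * of_bool (hs x) + potential H k hs (hist @ [(x, None)])
    \<le> potential H k hs hist + 1"
proof (cases "hs x")
  case True
  then have "\<not> (\<exists>g\<in>version_space H hist. g \<noteq> hs \<and> g x)"
    using assms(1,2) by (auto simp: at_most_one_labelling_def)
  then have "rival_charge H hs (hist @ [(x, None)]) = rival_charge H hs hist"
    by (simp add: rival_charge_append_None)
  moreover have "k - unobserved_positives hist hs
      = Suc (k - unobserved_positives (hist @ [(x, None)]) hs)"
    using assms(3) True by simp
  ultimately show ?thesis
    using True by (simp add: potential_def)
qed (simp add: potential_def rival_charge_append_None)

lemma threshold_learner_round:
  fixes k :: nat
  assumes ns: "\<not> shatters_depth H 2"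
    and hs: "hs \<in> version_space H hist" "hs x = y"
    and inv: "unobserved_rounds_unique H hist"
  defines "p \<equiv> threshold_learner H k hist x"
  defines "hist' \<equiv> hist @ [(x, if p then Some y else None)]"
  shows "hs \<in> version_space H hist' \<and> unobserved_rounds_unique H hist'
    \<and> (k + 1) * of_bool (p \<noteq> y) + potential H k hs hist' \<le> potential H k hs hist + 1"
proof (cases p)
  case True
  then have hist': "hist' = hist @ [(x, Some y)]" by (simp add: hist'_def)
  have "(k + 1) * of_bool (p \<noteq> y) + potential H k hs hist' \<le> potential H k hs hist + 1"
  proof (cases y)
    case True
    have "rival_charge H hs hist' + 0 \<le> rival_charge H hs hist"
      by (simp add: hist' rival_charge_append_Some_le)
    then have "potential H k hs hist' + 0 \<le> potential H k hs hist"
      unfolding hist' by (rule potential_append_Some_add_le)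
    then show ?thesis
      using \<open>p\<close> True by simp
  next
    case False
    obtain g where "g \<in> version_space H hist" "g x"
      "k \<le> unobserved_positives hist g \<or> at_most_one_labelling (version_space H hist) x False"
      using \<open>p\<close> by (auto simp: p_def threshold_learner_def)
    then have "potential H k hs hist' + k \<le> potential H k hs hist"
      using potential_false_positive[OF inv hs(1)] hs(2) False by (simp add: hist')
    then show ?thesis
      using \<open>p\<close> False by simp
  qed
  moreover have "hs \<in> version_space H hist'" and "unobserved_rounds_unique H hist'"
    using hs inv by (simp_all add: hist' unobserved_rounds_unique_append_Some)
  ultimately show ?thesis by blast
next
  case False
  then have hist': "hist' = hist @ [(x, None)]" by (simp add: hist'_def)
  have positive_unique: "at_most_one_labelling (version_space H hist) x True"
  proof (cases "\<exists>g\<in>version_space H hist. g x")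
    case True
    with \<open>\<not> p\<close> have "\<not> at_most_one_labelling (version_space H hist) x False"
      by (auto simp: p_def threshold_learner_def)
    then show ?thesis
      using not_shatters_2_at_most_one_labelling[OF ns version_space_subset] by fastforce
  qed (auto simp: at_most_one_labelling_def)
  have "hs x \<Longrightarrow> unobserved_positives hist hs < k"
    using \<open>\<not> p\<close> hs(1) by (auto simp: p_def threshold_learner_def)
  then show ?thesis
    using potential_unobserved[OF positive_unique hs(1)] hs inv positive_unique False
    by (simp add: hist' unobserved_rounds_unique_append_None)
qed

lemma threshold_learner_mistakes:
  assumes ns: "\<not> shatters_depth H 2"
  shows "hs \<in> version_space H hist \<Longrightarrow> \<forall>(x, y)\<in>set rest. hs x = y
    \<Longrightarrow> unobserved_rounds_unique H hist
    \<Longrightarrow> (k + 1) * at_mistakes_from hist (threshold_learner H k) rest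
          \<le> potential H k hs hist + length rest"
proof (induction rest arbitrary: hist)
  case (Cons a rest)
  obtain x y where a: "a = (x, y)" by (cases a)
  define p where "p = threshold_learner H k hist x"
  define hist' where "hist' = hist @ [(x, if p then Some y else None)]"
  have round: "hs \<in> version_space H hist' \<and> unobserved_rounds_unique H hist'
      \<and> (k + 1) * of_bool (p \<noteq> y) + potential H k hs hist' \<le> potential H k hs hist + 1"
    using threshold_learner_round[OF ns Cons.prems(1) _ Cons.prems(3)] Cons.prems(2)
    by (simp add: a p_def hist'_def)
  have "at_mistakes_from hist (threshold_learner H k) (a # rest)
      = of_bool (p \<noteq> y) + at_mistakes_from hist' (threshold_learner H k) rest"
    by (simp add: a Let_def p_def hist'_def)
  moreover have "(k + 1) * at_mistakes_from hist' (threshold_learner H k) rest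
      \<le> potential H k hs hist' + length rest"
    using Cons.IH[of hist'] round Cons.prems(2) by simp
  ultimately show ?case
    using round by (simp add: add_mult_distrib2)
qed simp

lemma sqrt_threshold_mistake_bound:
  fixes m T :: nat
  defines "k \<equiv> nat \<lfloor>sqrt (real T)\<rfloor>"
  assumes "(k + 1) * m \<le> (k + 1) * (k + 1) + T"
  shows "real m \<le> 1 + 2 * sqrt (real T)"
proof -
  have k: "real k = real_of_int \<lfloor>sqrt (real T)\<rfloor>"
    unfolding k_def by simp
  have k_le: "real k \<le> sqrt (real T)" and k_gt: "sqrt (real T) < real k + 1"
    unfolding k by linarith+
  have "real T = sqrt (real T) * sqrt (real T)" by simp
  also have "\<dots> \<le> (real k + 1) * sqrt (real T)"
    using k_gt by (intro mult_right_mono) auto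
  finally have T_le: "real T \<le> (real k + 1) * sqrt (real T)" .
  have "real ((k + 1) * m) \<le> real ((k + 1) * (k + 1) + T)"
    using assms(2) by (simp only: of_nat_le_iff)
  then have "(real k + 1) * real m \<le> (real k + 1) * (real k + 1) + real T"
    by (simp add: algebra_simps)
  also have "\<dots> \<le> (real k + 1) * (real k + 1 + sqrt (real T))"
    using T_le by (simp add: algebra_simps)
  finally have "(real k + 1) * real m \<le> (real k + 1) * (real k + 1 + sqrt (real T))" .
  then have "real m \<le> real k + 1 + sqrt (real T)"
    by (rule mult_left_le_imp_le) simp
  then show ?thesis using k_le by simp
qed

theorem theorem5:
  fixes H :: "('x \<Rightarrow> bool) set" and T :: nat
  assumes "littlestone_dim_eq H 1"
  shows "\<exists>L :: 'x at_learner. \<forall>s. length s = T \<longrightarrow> realizable H s \<longrightarrow>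
           real (at_mistakes L s) \<le> 1 + 2 * sqrt (real T)"
proof -
  have ns: "\<not> shatters_depth H 2"
    using assms unfolding littlestone_dim_eq_def by fastforce
  define k where "k = nat \<lfloor>sqrt (real T)\<rfloor>"
  show ?thesis
  proof (intro exI[of _ "threshold_learner H k"] allI impI)
    fix s :: "('x \<times> bool) list" assume "length s = T" and "realizable H s"
    then obtain hs where "hs \<in> H" "\<forall>(x, y)\<in>set s. hs x = y"
      unfolding realizable_def by blast
    then have "(k + 1) * at_mistakes (threshold_learner H k) s \<le> potential H k hs [] + T"
      using threshold_learner_mistakes[OF ns, of hs "[]" s k] \<open>length s = T\<close>
      by (simp add: at_mistakes_def unobserved_rounds_unique_Nil)
    then show "real (at_mistakes (threshold_learner H k) s) \<le> 1 + 2 * sqrt (real T)"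
      using potential_Nil_le[of H k hs] unfolding k_def
      by (intro sqrt_threshold_mistake_bound) linarith
  qed
qed

end
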